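(* Let $\mathcal{G}=(\mathcal{V},\mathcal{E},A)$ be a connected directed graph with diagonal matrix of out-degrees $D$, and suppose there is a permutation matrix $P$ with $D=AP$. Let $\mathcal{G}_u$ be the undirected graph on the same node set with adjacency matrix $A_u=\frac12(A+A^T)$ (so $(i,j)\in\mathcal{E}$ implies both $(i,j)$ and $(j,i)$ are edges of $\mathcal{G}_u$). Then for every pair of nodes $k,j$, the effective resistance between $k$ and $j$ in $\mathcal{G}$ equals the effective resistance between $k$ and $j$ in $\mathcal{G}_u$.
   Context: A (weighted directed) graph $\mathcal{G}=(\mathcal{V},\mathcal{E},A)$ has node set $\mathcal{V}=\{1,\dots,N\}$, edge set $\mathcal{E}\subseteq\mathcal{V}\times\mathcal{V}$, and nonnegative adjacency matrix $A=[a_{i,j}]\in\mathbb{R}^{N\times N}$ with $a_{i,j}>0$ iff $(i,j)\in\mathcal{E}$; $(i,j)$ is an edge from $i$ to $j$. The graph is undirected if $A$ is symmetric. The out-degree of node $k$ is $d_k=\sum_j a_{k,j}$, $D=\mathrm{diag}(d_1,\dots,d_N)$, and the Laplacian is $L=D-A$. Directed paths follow edges in their direction. $\mathcal{G}$ is connected if it contains a globally reachable node (a node reachable by a directed path from every node). Let $\mathbf{1}_N$ be the all-ones vector, $\Pi=I_N-\frac1N\mathbf{1}_N\mathbf{1}_N^T$, and $Q\in\mathbb{R}^{(N-1)\times N}$ any matrix with $Q\mathbf{1}_N=\mathbf{0}$, $QQ^T=I_{N-1}$, $Q^TQ=\Pi$. For connected $\mathcal{G}$, let $\overline{L}=QLQ^T$,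 let $\Sigma$ be the unique solution of $\overline{L}\Sigma+\Sigma\overline{L}^T=I_{N-1}$, and $X=[x_{i,j}]=2Q^T\Sigma Q$ ($X$ does not depend on the choice of $Q$). The effective resistance between nodes $k$ and $j$ is $r_{k,j}=x_{k,k}+x_{j,j}-2x_{k,j}$. A permutation matrix has exactly one entry $1$ in each row and column and zeros elsewhere. *)

theory Defs
  imports "Jordan_Normal_Form.Matrix"
begin

text \<open>Nodes are indexed 0,...,N-1 (instead of 1,...,N). A weighted directed graph on N nodes
  is given by its nonnegative adjacency matrix A (an N x N real matrix); (i,j) is an edge iff A(i,j) > 0.\<close>

definition adjacency_matrix :: "nat \<Rightarrow> real mat \<Rightarrow> bool" where
  "adjacency_matrix N A \<longleftrightarrow> A \<in> carrier_mat N N \<and> (\<forall>i<N. \<forall>j<N. A $$ (i,j) \<ge> 0)"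

definition edges :: "nat \<Rightarrow> real mat \<Rightarrow> (nat \<times> nat) set" where
  "edges N A = {(i,j). i < N \<and> j < N \<and> A $$ (i,j) > 0}"

definition globally_reachable :: "nat \<Rightarrow> real mat \<Rightarrow> nat \<Rightarrow> bool" where
  "globally_reachable N A k \<longleftrightarrow> k < N \<and> (\<forall>i<N. (i,k) \<in> (edges N A)\<^sup>*)"

definition connected_graph :: "nat \<Rightarrow> real mat \<Rightarrow> bool" where
  "connected_graph N A \<longleftrightarrow> (\<exists>k. globally_reachable N A k)"

definition out_degree_mat :: "nat \<Rightarrow> real mat \<Rightarrow> real mat" where
  "out_degree_mat N A = mat N N (\<lambda>(i,j). if i = j then (\<Sum>l<N. A $$ (i,l)) else 0)"

definition laplacian :: "nat \<Rightarrow> real mat \<Rightarrow> real mat" where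
  "laplacian N A = out_degree_mat N A - A"

definition ones_vec :: "nat \<Rightarrow> real vec" where
  "ones_vec N = vec N (\<lambda>_. 1)"

definition Pi_mat :: "nat \<Rightarrow> real mat" where
  "Pi_mat N = 1\<^sub>m N - (1 / real N) \<cdot>\<^sub>m mat N N (\<lambda>_. 1)"

definition valid_Q :: "nat \<Rightarrow> real mat \<Rightarrow> bool" where
  "valid_Q N Q \<longleftrightarrow> Q \<in> carrier_mat (N - 1) N \<and> Q *\<^sub>v ones_vec N = 0\<^sub>v (N - 1)
     \<and> Q * Q\<^sup>T = 1\<^sub>m (N - 1) \<and> Q\<^sup>T * Q = Pi_mat N"

definition Q_of :: "nat \<Rightarrow> real mat" where
  "Q_of N = (SOME Q. valid_Q N Q)"

definition reduced_laplacian :: "nat \<Rightarrow> real mat \<Rightarrow> real mat" where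
  "reduced_laplacian N A = Q_of N * laplacian N A * (Q_of N)\<^sup>T"

definition Sigma_of :: "nat \<Rightarrow> real mat \<Rightarrow> real mat" where
  "Sigma_of N A = (THE S. S \<in> carrier_mat (N - 1) (N - 1) \<and>
      reduced_laplacian N A * S + S * (reduced_laplacian N A)\<^sup>T = 1\<^sub>m (N - 1))"

definition X_of :: "nat \<Rightarrow> real mat \<Rightarrow> real mat" where
  "X_of N A = 2 \<cdot>\<^sub>m ((Q_of N)\<^sup>T * Sigma_of N A * Q_of N)"

definition effective_resistance :: "nat \<Rightarrow> real mat \<Rightarrow> nat \<Rightarrow> nat \<Rightarrow> real" where
  "effective_resistance N A k j =
     X_of N A $$ (k,k) + X_of N A $$ (j,j) - 2 * X_of N A $$ (k,j)"

definition permutation_mat :: "nat \<Rightarrow> real mat \<Rightarrow> bool" where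
  "permutation_mat N P \<longleftrightarrow> P \<in> carrier_mat N N \<and>
     (\<forall>i<N. \<forall>j<N. P $$ (i,j) = 0 \<or> P $$ (i,j) = 1) \<and>
     (\<forall>i<N. \<exists>!j. j < N \<and> P $$ (i,j) = 1) \<and>
     (\<forall>j<N. \<exists>!i. i < N \<and> P $$ (i,j) = 1)"

definition undirected_version :: "real mat \<Rightarrow> real mat" where
  "undirected_version A = (1/2) \<cdot>\<^sub>m (A + A\<^sup>T)"

end

theory Submission
  imports Defs "Jordan_Normal_Form.Determinant"
begin

text \<open>Since \<open>D = A P\<close> with \<open>P\<close> a permutation, \<open>A = D P\<^sup>T\<close>, so with \<open>U = I - P\<^sup>T\<close> the Laplacian of
  \<open>G\<close> factors as \<open>L = D U\<close> and that of \<open>G\<^sub>u\<close> as \<open>M = U\<^sup>T D U / 2\<close>. As \<open>U U\<^sup>T = U + U\<^sup>T\<close>, this gives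
  \<open>M L + L\<^sup>T M = 2 M\<^sup>2\<close>, an identity that survives the compression \<open>X \<mapsto> Q X Q\<^sup>T\<close> because \<open>M\<close>
  kills \<open>\<one>\<close>. Connectivity makes the compressed \<open>M\<close> positive definite, and then \<open>M\<^sup>-\<^sup>1 / 2\<close> solves
  both Lyapunov equations \<open>L \<Sigma> + \<Sigma> L\<^sup>T = I\<close> and \<open>M \<Sigma> + \<Sigma> M = I\<close>. Solutions are unique: pairing a
  solution of the homogeneous equation with \<open>M \<Sigma>\<^sup>T M\<close> gives a sum of two traces which are
  nonnegative by the same identity. Hence both graphs have the same \<open>\<Sigma>\<close>, so the same
  matrix \<open>X\<close> and the same effective resistances.\<close>

section \<open>Traces, positive definiteness and the Lyapunov equation\<close>

lemma square_mat_mult_carrier: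
  "X \<in> carrier_mat n n \<Longrightarrow> Y \<in> carrier_mat n n \<Longrightarrow> X * Y \<in> carrier_mat n n"
  by simp

lemma square_mat_mult_assoc:
  fixes X Y Z :: "'a::semiring_0 mat"
  shows "X \<in> carrier_mat n n \<Longrightarrow> Y \<in> carrier_mat n n \<Longrightarrow> Z \<in> carrier_mat n n \<Longrightarrow>
    X * Y * Z = X * (Y * Z)"
  by simp

lemma square_mat_transpose_mult:
  fixes X Y :: "'a::comm_semiring_0 mat"
  shows "X \<in> carrier_mat n n \<Longrightarrow> Y \<in> carrier_mat n n \<Longrightarrow> (X * Y)\<^sup>T = Y\<^sup>T * X\<^sup>T"
  by (simp add: transpose_mult)

lemma square_mat_smult_mult:
  fixes X Y :: "'a::comm_semiring_0 mat"
  shows "X \<in> carrier_mat n n \<Longrightarrow> Y \<in> carrier_mat n n \<Longrightarrow> (c \<cdot>\<^sub>m X) * Y = c \<cdot>\<^sub>m (X * Y)"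
    and "X \<in> carrier_mat n n \<Longrightarrow> Y \<in> carrier_mat n n \<Longrightarrow> X * (c \<cdot>\<^sub>m Y) = c \<cdot>\<^sub>m (X * Y)"
  by (simp_all add: mult_smult_assoc_mat[of _ n n _ n] mult_smult_distrib[of _ n n _ n])

lemmas square_mat_simps =
  square_mat_mult_carrier square_mat_mult_assoc square_mat_transpose_mult square_mat_smult_mult

definition mat_trace :: "'a::comm_ring_1 mat \<Rightarrow> 'a" where
  "mat_trace X = (\<Sum>i<dim_row X. X $$ (i,i))"

lemma mat_trace_mult_comm:
  fixes X Y :: "'a::comm_ring_1 mat"
  assumes "X \<in> carrier_mat n m" "Y \<in> carrier_mat m n"
  shows "mat_trace (X * Y) = mat_trace (Y * X)"
proof -
  have "mat_trace (X * Y) = (\<Sum>i<n. \<Sum>k<m. X $$ (i,k) * Y $$ (k,i))"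
    using assms by (simp add: mat_trace_def scalar_prod_def atLeast0LessThan)
  also have "\<dots> = (\<Sum>k<m. \<Sum>i<n. Y $$ (k,i) * X $$ (i,k))"
    by (subst sum.swap) (simp add: mult.commute)
  also have "\<dots> = mat_trace (Y * X)"
    using assms by (simp add: mat_trace_def scalar_prod_def atLeast0LessThan)
  finally show ?thesis .
qed

lemma mat_trace_transpose: "X \<in> carrier_mat n n \<Longrightarrow> mat_trace X\<^sup>T = mat_trace X"
  by (simp add: mat_trace_def)

lemma mat_trace_add:
  "X \<in> carrier_mat n n \<Longrightarrow> Y \<in> carrier_mat n n \<Longrightarrow> mat_trace (X + Y) = mat_trace X + mat_trace Y"
  by (simp add: mat_trace_def sum.distrib)

lemma mat_trace_smult: "X \<in> carrier_mat n n \<Longrightarrow> mat_trace (c \<cdot>\<^sub>m X) = c * mat_trace X"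
  by (simp add: mat_trace_def sum_distrib_left)

lemma mat_trace_mult_symmetric:
  fixes C G :: "'a::comm_ring_1 mat"
  assumes C: "C \<in> carrier_mat n n" and G: "G \<in> carrier_mat n n" and "G\<^sup>T = G"
  shows "mat_trace (C * G) = mat_trace (C\<^sup>T * G)"
proof -
  have "mat_trace (C * G) = mat_trace (G * C\<^sup>T)"
    using C G assms(3) mat_trace_transpose[of "C * G" n] by (simp add: transpose_mult)
  also have "\<dots> = mat_trace (C\<^sup>T * G)"
    using C G by (intro mat_trace_mult_comm) auto
  finally show ?thesis .
qed

definition positive_definite :: "nat \<Rightarrow> real mat \<Rightarrow> bool" where
  "positive_definite n M \<longleftrightarrow> (\<forall>v \<in> carrier_vec n. v \<noteq> 0\<^sub>v n \<longrightarrow> v \<bullet> (M *\<^sub>v v) > 0)"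

lemma positive_definite_trace_congruence:
  assumes M: "M \<in> carrier_mat n n" and pd: "positive_definite n M" and W: "W \<in> carrier_mat m n"
  shows "mat_trace (W * M * W\<^sup>T) \<ge> 0" and "mat_trace (W * M * W\<^sup>T) = 0 \<Longrightarrow> W = 0\<^sub>m m n"
proof -
  have trace_eq: "mat_trace (W * M * W\<^sup>T) = (\<Sum>i<m. row W i \<bullet> (M *\<^sub>v row W i))"
    unfolding mat_trace_def using M W
    by (subst assoc_mult_mat[of _ m n _ n _ m]) (auto simp: mult_mat_vec_def intro!: sum.cong)
  have row_nonneg: "row W i \<bullet> (M *\<^sub>v row W i) \<ge> 0" if "i < m" for i
    using pd M W that unfolding positive_definite_def
    by (cases "row W i = 0\<^sub>v n") (auto intro: less_imp_le)
  show "mat_trace (W * M * W\<^sup>T) \<ge> 0"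
    unfolding trace_eq using row_nonneg by (intro sum_nonneg) auto
  assume "mat_trace (W * M * W\<^sup>T) = 0"
  then have "\<forall>i\<in>{..<m}. row W i \<bullet> (M *\<^sub>v row W i) = 0"
    unfolding trace_eq using row_nonneg by (subst sum_nonneg_eq_0_iff[symmetric]) auto
  then have rows_zero: "row W i = 0\<^sub>v n" if "i < m" for i
    using pd W that unfolding positive_definite_def by (metis lessThan_iff less_irrefl row_carrier_vec)
  have "W $$ (i,j) = 0" if "i < m" "j < n" for i j
    using index_row(1)[of i W j] rows_zero[of i] W that by simp
  then show "W = 0\<^sub>m m n"
    using W by (intro eq_matI) auto
qed

lemma positive_definite_mult_eq_zero:
  assumes M: "M \<in> carrier_mat n n" and pd: "positive_definite n M"
    and S: "S \<in> carrier_mat n m" and MS: "M * S = 0\<^sub>m n m"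
  shows "S = 0\<^sub>m n m"
proof -
  have "mat_trace (S\<^sup>T * M * S\<^sup>T\<^sup>T) = mat_trace (S\<^sup>T * (M * S))"
    using M S by simp
  also have "\<dots> = 0"
    using S unfolding MS by (simp add: mat_trace_def)
  finally have "S\<^sup>T = 0\<^sub>m m n"
    using positive_definite_trace_congruence(2)[OF M pd, of "S\<^sup>T" m] S by simp
  then show ?thesis
    using S by (metis transpose_transpose zero_transpose_mat)
qed

lemma positive_definite_invertible:
  assumes M: "M \<in> carrier_mat n n" and pd: "positive_definite n M"
  obtains B where "B \<in> carrier_mat n n" "B * M = 1\<^sub>m n" "M * B = 1\<^sub>m n"
proof -
  have "det M \<noteq> 0"
  proof
    assume "det M = 0"
    then obtain v where "v \<in> carrier_vec n" "v \<noteq> 0\<^sub>v n" "M *\<^sub>v v = 0\<^sub>v n"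
      using det_0_iff_vec_prod_zero_field[OF M] by blast
    then show False
      using pd unfolding positive_definite_def by fastforce
  qed
  then have "M \<in> Units (ring_mat TYPE(real) n ())"
    by (rule det_non_zero_imp_unit[OF M])
  then obtain B where B: "B \<in> carrier_mat n n" and BM: "B * M = 1\<^sub>m n"
    unfolding Units_def ring_mat_def by auto
  then show ?thesis
    using that mat_mult_left_right_inverse[OF B M BM] by blast
qed

lemma compatible_trace_nonneg:
  assumes M: "M \<in> carrier_mat n n" and L: "L \<in> carrier_mat n n" and S: "S \<in> carrier_mat n n"
    and sym: "M\<^sup>T = M" and pd: "positive_definite n M"
    and compatible: "M * L + L\<^sup>T * M = 2 \<cdot>\<^sub>m (M * M)"
  shows "mat_trace (M * L * S * M * S\<^sup>T) \<ge> 0"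
    and "mat_trace (M * L * S * M * S\<^sup>T) = 0 \<Longrightarrow> S = 0\<^sub>m n n"
proof -
  note square_mat_simps[where n = n, simp]
  define G where "G = S * M * S\<^sup>T"
  have G: "G \<in> carrier_mat n n" and G_sym: "G\<^sup>T = G"
    unfolding G_def using M S sym by simp_all
  have "mat_trace (M * L * G) = mat_trace ((M * L)\<^sup>T * G)"
    using M L G G_sym by (intro mat_trace_mult_symmetric) auto
  then have "2 * mat_trace (M * L * G) = mat_trace ((M * L + L\<^sup>T * M) * G)"
    using M L G sym by (simp add: mat_trace_add[of _ n] add_mult_distrib_mat[of _ n n])
  also have "\<dots> = 2 * mat_trace (M * M * G)"
    unfolding compatible using M G by (simp add: mat_trace_smult[of _ n] mult_smult_assoc_mat[of _ n n])
  finally have "mat_trace (M * L * G) = mat_trace (M * (M * G))"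
    using M G by simp
  also have "\<dots> = mat_trace (M * G * M)"
    using M G by (subst mat_trace_mult_comm[of M n n]) auto
  finally have trace_eq: "mat_trace (M * L * S * M * S\<^sup>T) = mat_trace ((M * S) * M * (M * S)\<^sup>T)"
    unfolding G_def using M L S sym by simp
  show "mat_trace (M * L * S * M * S\<^sup>T) \<ge> 0"
    unfolding trace_eq using M S pd by (intro positive_definite_trace_congruence(1)) auto
  assume "mat_trace (M * L * S * M * S\<^sup>T) = 0"
  then have "M * S = 0\<^sub>m n n"
    unfolding trace_eq using M S pd by (intro positive_definite_trace_congruence(2)) auto
  then show "S = 0\<^sub>m n n"
    using positive_definite_mult_eq_zero[OF M pd S] by simp
qed

lemma lyapunov_homogeneous_eq_zero:
  assumes M: "M \<in> carrier_mat n n" and L: "L \<in> carrier_mat n n" and S: "S \<in> carrier_mat n n"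
    and sym: "M\<^sup>T = M" and pd: "positive_definite n M"
    and compatible: "M * L + L\<^sup>T * M = 2 \<cdot>\<^sub>m (M * M)"
    and LS: "L * S + S * L\<^sup>T = 0\<^sub>m n n"
  shows "S = 0\<^sub>m n n"
proof -
  note square_mat_simps[where n = n, simp]
  define f where "f T = mat_trace (M * L * T * M * T\<^sup>T)" for T
  have S': "S\<^sup>T \<in> carrier_mat n n"
    using S by simp
  \<comment> \<open>Pairing the equation with \<open>M S\<^sup>T M\<close> yields \<open>f S + f S\<^sup>T\<close>.\<close>
  define K where "K = M * S\<^sup>T * M"
  have K: "K \<in> carrier_mat n n"
    unfolding K_def using M S by simp
  have "0 = mat_trace (K * (L * S + S * L\<^sup>T))"
    using K unfolding LS by (simp add: mat_trace_def)
  also have "\<dots> = mat_trace (K * (L * S)) + mat_trace (K * (S * L\<^sup>T))"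
    using K L S mult_add_distrib_mat[of K n n "L * S" n "S * L\<^sup>T"]
      mat_trace_add[of "K * (L * S)" n "K * (S * L\<^sup>T)"] by simp
  also have "mat_trace (K * (L * S)) = f S"
    unfolding f_def K_def using M L S mat_trace_mult_comm[of "M * S\<^sup>T" n n "M * (L * S)"] by simp
  also have "mat_trace (K * (S * L\<^sup>T)) = f S\<^sup>T"
  proof -
    have "mat_trace (K * (S * L\<^sup>T)) = mat_trace ((M * S\<^sup>T * M * (S * L\<^sup>T))\<^sup>T)"
      unfolding K_def using M L S sym mat_trace_transpose[of "M * S\<^sup>T * M * (S * L\<^sup>T)" n] by simp
    also have "\<dots> = mat_trace ((L * S\<^sup>T * M * S) * M)"
      using M L S sym by simp
    also have "\<dots> = f S\<^sup>T"
      unfolding f_def using M L S mat_trace_mult_comm[of "L * S\<^sup>T * M * S" n n M] by simp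
    finally show ?thesis .
  qed
  finally have "f S + f S\<^sup>T = 0" by simp
  moreover have "f S \<ge> 0" "f S\<^sup>T \<ge> 0"
    unfolding f_def using compatible_trace_nonneg(1)[OF M L S sym pd compatible]
      compatible_trace_nonneg(1)[OF M L S' sym pd compatible] by simp_all
  ultimately have "f S = 0" by simp
  then show ?thesis
    unfolding f_def using compatible_trace_nonneg(2)[OF M L S sym pd compatible] by simp
qed

definition lyapunov_solution :: "nat \<Rightarrow> real mat \<Rightarrow> real mat" where
  "lyapunov_solution n L = (THE S. S \<in> carrier_mat n n \<and> L * S + S * L\<^sup>T = 1\<^sub>m n)"

lemma lyapunov_solution_eq_half_inverse:
  assumes M: "M \<in> carrier_mat n n" and L: "L \<in> carrier_mat n n"
    and sym: "M\<^sup>T = M" and pd: "positive_definite n M"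
    and compatible: "M * L + L\<^sup>T * M = 2 \<cdot>\<^sub>m (M * M)"
    and B: "B \<in> carrier_mat n n" and BM: "B * M = 1\<^sub>m n" and MB: "M * B = 1\<^sub>m n"
  shows "lyapunov_solution n L = (1/2) \<cdot>\<^sub>m B"
proof -
  note square_mat_simps[where n = n, simp]
  have "L * B + B * L\<^sup>T = (B * M) * L * B + B * L\<^sup>T * (M * B)"
    using L B unfolding BM MB by simp
  also have "\<dots> = B * (M * L + L\<^sup>T * M) * B"
    using M L B mult_add_distrib_mat[of B n n "M * (L * B)" n "L\<^sup>T * (M * B)"]
    by (simp add: add_mult_distrib_mat[of _ n n _ B])
  also have "\<dots> = 2 \<cdot>\<^sub>m ((B * M) * (M * B))"
    unfolding compatible using M B by (simp add: mult_smult_distrib[of _ n n _ n] mult_smult_assoc_mat[of _ n n])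
  finally have "L * B + B * L\<^sup>T = 2 \<cdot>\<^sub>m 1\<^sub>m n"
    using BM MB by simp
  moreover have "L * ((1/2) \<cdot>\<^sub>m B) + ((1/2) \<cdot>\<^sub>m B) * L\<^sup>T = (1/2) \<cdot>\<^sub>m (L * B + B * L\<^sup>T)"
    using L B by (simp add: mult_smult_distrib[of L n n B n] mult_smult_assoc_mat[of B n n _ n]
        add_smult_distrib_left_mat[of _ n n])
  ultimately have solution: "L * ((1/2) \<cdot>\<^sub>m B) + ((1/2) \<cdot>\<^sub>m B) * L\<^sup>T = 1\<^sub>m n"
    by (auto intro: eq_matI)
  show ?thesis
    unfolding lyapunov_solution_def
  proof (rule the_equality)
    fix S assume S: "S \<in> carrier_mat n n \<and> L * S + S * L\<^sup>T = 1\<^sub>m n"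
    define S\<^sub>0 where "S\<^sub>0 = (1/2) \<cdot>\<^sub>m B"
    have S\<^sub>0: "S\<^sub>0 \<in> carrier_mat n n"
      unfolding S\<^sub>0_def using B by simp
    define E where "E = S - S\<^sub>0"
    have E: "E \<in> carrier_mat n n"
      unfolding E_def using S S\<^sub>0 by (simp add: minus_carrier_mat)
    have "L * E + E * L\<^sup>T = (L * S - L * S\<^sub>0) + (S * L\<^sup>T - S\<^sub>0 * L\<^sup>T)"
      unfolding E_def using S S\<^sub>0 L mult_minus_distrib_mat[of L n n S n S\<^sub>0]
      by (simp add: minus_mult_distrib_mat[of _ n n])
    also have "\<dots> = (L * S + S * L\<^sup>T) - (L * S\<^sub>0 + S\<^sub>0 * L\<^sup>T)"
      using S[THEN conjunct1] S\<^sub>0 L by (intro eq_matI) auto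
    also have "\<dots> = 0\<^sub>m n n"
      unfolding S\<^sub>0_def solution using S by (intro eq_matI) auto
    finally have E_zero: "E = 0\<^sub>m n n"
      by (rule lyapunov_homogeneous_eq_zero[OF M L E sym pd compatible])
    have "S $$ (i,j) = S\<^sub>0 $$ (i,j)" if "i < n" "j < n" for i j
      using arg_cong[OF E_zero, of "\<lambda>X. X $$ (i,j)"] S[THEN conjunct1] S\<^sub>0 that
      unfolding E_def by simp
    then show "S = (1/2) \<cdot>\<^sub>m B"
      unfolding S\<^sub>0_def[symmetric] using S[THEN conjunct1] S\<^sub>0 by (intro eq_matI) auto
  qed (use B solution in simp)
qed

lemma lyapunov_solution_eq_of_compatible:
  assumes M: "M \<in> carrier_mat n n" and L: "L \<in> carrier_mat n n"
    and sym: "M\<^sup>T = M" and pd: "positive_definite n M"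
    and compatible: "M * L + L\<^sup>T * M = 2 \<cdot>\<^sub>m (M * M)"
  shows "lyapunov_solution n L = lyapunov_solution n M"
proof -
  obtain B where B: "B \<in> carrier_mat n n" and BM: "B * M = 1\<^sub>m n" and MB: "M * B = 1\<^sub>m n"
    using positive_definite_invertible[OF M pd] by blast
  have "M * M + M\<^sup>T * M = 2 \<cdot>\<^sub>m (M * M)"
    unfolding sym using M by (intro eq_matI) auto
  then show ?thesis
    using lyapunov_solution_eq_half_inverse[OF M L sym pd compatible B BM MB]
      lyapunov_solution_eq_half_inverse[OF M M sym pd _ B BM MB] by simp
qed

section \<open>Existence of a valid \<open>Q\<close>\<close>

text \<open>\<open>Q_of N\<close> is a choice; the rows \<open>1, \<dots>, N - 1\<close> of the Helmert matrix show that a valid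
  \<open>Q\<close> exists.\<close>

definition helmert_entry :: "nat \<Rightarrow> nat \<Rightarrow> real" where
  "helmert_entry m i =
    (if i < m then 1 / sqrt (real m * (real m + 1))
     else if i = m then - real m / sqrt (real m * (real m + 1)) else 0)"

lemma sum_if_less_if_eq:
  "m < N \<Longrightarrow> (\<Sum>i<N. if i < m then a else if i = m then b else 0) = real m * a + (b::real)"
  by (induction N) (auto simp: less_Suc_eq)

lemma helmert_entry_sum: "m < N \<Longrightarrow> (\<Sum>i<N. helmert_entry m i) = 0"
  unfolding helmert_entry_def by (subst sum_if_less_if_eq) (auto simp: field_simps)

lemma helmert_entry_orthogonal:
  assumes "a < b" "b < N"
  shows "(\<Sum>i<N. helmert_entry a i * helmert_entry b i) = 0"
proof -
  have "helmert_entry a i * helmert_entry b i = helmert_entry a i / sqrt (real b * (real b + 1))" for i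
    using assms by (cases "i \<le> a") (auto simp: helmert_entry_def)
  then show ?thesis
    using helmert_entry_sum[of a N] assms by (simp add: sum_divide_distrib[symmetric])
qed

lemma helmert_entry_norm:
  assumes "1 \<le> m" "m < N"
  shows "(\<Sum>i<N. helmert_entry m i * helmert_entry m i) = 1"
proof -
  have pos: "real m * (real m + 1) > 0"
    using assms by simp
  have "(\<Sum>i<N. helmert_entry m i * helmert_entry m i)
      = (\<Sum>i<N. if i < m then 1 / (real m * (real m + 1))
                 else if i = m then real m ^ 2 / (real m * (real m + 1)) else 0)"
    using pos by (intro sum.cong refl) (auto simp: helmert_entry_def power2_eq_square)
  also have "\<dots> = (real m + real m ^ 2) / (real m * (real m + 1))"
    using assms by (subst sum_if_less_if_eq) (auto simp: add_divide_distrib)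
  also have "\<dots> = 1"
    using pos by (simp add: power2_eq_square algebra_simps)
  finally show ?thesis .
qed

definition helmert_mat :: "nat \<Rightarrow> real mat" where
  "helmert_mat N = mat (N - 1) N (\<lambda>(k,i). helmert_entry (k + 1) i)"

lemma helmert_mat_carrier: "helmert_mat N \<in> carrier_mat (N - 1) N"
  by (simp add: helmert_mat_def)

lemma helmert_mat_ones: "helmert_mat N *\<^sub>v ones_vec N = 0\<^sub>v (N - 1)"
  by (intro eq_vecI)
    (auto simp: helmert_mat_def ones_vec_def scalar_prod_def atLeast0LessThan helmert_entry_sum)

lemma helmert_mat_orthonormal_rows: "helmert_mat N * (helmert_mat N)\<^sup>T = 1\<^sub>m (N - 1)"
proof (rule eq_matI)
  fix k l assume "k < dim_row (1\<^sub>m (N - 1))" "l < dim_col (1\<^sub>m (N - 1))"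
  then have kl: "k < N - 1" "l < N - 1"
    by auto
  have "(helmert_mat N * (helmert_mat N)\<^sup>T) $$ (k,l) = (\<Sum>i<N. helmert_entry (k + 1) i * helmert_entry (l + 1) i)"
    using kl by (simp add: helmert_mat_def scalar_prod_def atLeast0LessThan)
  also have "\<dots> = (if k = l then 1 else 0)"
    using kl helmert_entry_norm[of "k + 1" N] helmert_entry_orthogonal[of "k + 1" "l + 1" N]
      helmert_entry_orthogonal[of "l + 1" "k + 1" N]
    by (auto simp: mult.commute linorder_neq_iff)
  finally show "(helmert_mat N * (helmert_mat N)\<^sup>T) $$ (k,l) = 1\<^sub>m (N - 1) $$ (k,l)"
    using kl by simp
qed (auto simp: helmert_mat_def)

lemma orthonormal_completion:
  assumes N: "N \<ge> 1" and Q: "Q \<in> carrier_mat (N - 1) N"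
    and Q_ones: "Q *\<^sub>v ones_vec N = 0\<^sub>v (N - 1)" and QQt: "Q * Q\<^sup>T = 1\<^sub>m (N - 1)"
  defines "R \<equiv> mat N N (\<lambda>(i,j). if i < N - 1 then Q $$ (i,j) else 1 / sqrt (real N))"
  shows "R * R\<^sup>T = 1\<^sub>m N"
proof (rule eq_matI)
  have row_sum: "(\<Sum>l<N. Q $$ (i,l)) = 0" if "i < N - 1" for i
    using arg_cong[OF Q_ones, of "\<lambda>v. v $ i"] that Q
    by (simp add: ones_vec_def scalar_prod_def atLeast0LessThan)
  have row_prod: "(\<Sum>l<N. Q $$ (i,l) * Q $$ (j,l)) = (if i = j then 1 else 0)"
    if "i < N - 1" "j < N - 1" for i j
    using arg_cong[OF QQt, of "\<lambda>X. X $$ (i,j)"] that Q by (simp add: scalar_prod_def atLeast0LessThan)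
  fix i j assume "i < dim_row (1\<^sub>m N)" "j < dim_col (1\<^sub>m N)"
  then have ij: "i < N" "j < N"
    by auto
  have "(R * R\<^sup>T) $$ (i,j) = (\<Sum>l<N. R $$ (i,l) * R $$ (j,l))"
    using ij by (simp add: R_def scalar_prod_def atLeast0LessThan)
  also have "\<dots> = (if i = j then 1 else 0)"
  proof (cases "i < N - 1"; cases "j < N - 1")
    assume "\<not> i < N - 1" "\<not> j < N - 1"
    then have "(\<Sum>l<N. R $$ (i,l) * R $$ (j,l)) = (\<Sum>l<N. 1 / real N)"
      using ij N by (intro sum.cong refl) (simp add: R_def real_sqrt_mult[symmetric])
    then show ?thesis
      using ij N \<open>\<not> i < N - 1\<close> \<open>\<not> j < N - 1\<close> by simp
  qed (use ij row_sum row_prod in \<open>simp_all add: R_def sum_divide_distrib[symmetric] mult.commute[of "1 / _"]\<close>)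
  finally show "(R * R\<^sup>T) $$ (i,j) = 1\<^sub>m N $$ (i,j)"
    using ij by simp
qed (auto simp: R_def)

lemma valid_Q_if_orthonormal_rows:
  assumes N: "N \<ge> 1" and Q: "Q \<in> carrier_mat (N - 1) N"
    and Q_ones: "Q *\<^sub>v ones_vec N = 0\<^sub>v (N - 1)" and QQt: "Q * Q\<^sup>T = 1\<^sub>m (N - 1)"
  shows "valid_Q N Q"
proof -
  define R where "R = mat N N (\<lambda>(i,j). if i < N - 1 then Q $$ (i,j) else 1 / sqrt (real N))"
  have R: "R \<in> carrier_mat N N"
    by (simp add: R_def)
  have RtR: "R\<^sup>T * R = 1\<^sub>m N"
    using mat_mult_left_right_inverse[OF R _ orthonormal_completion[OF N Q Q_ones QQt, folded R_def]] R
    by simp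
  obtain N' where N': "N = Suc N'"
    using N by (cases N) auto
  have "(Q\<^sup>T * Q) $$ (i,j) = Pi_mat N $$ (i,j)" if ij: "i < N" "j < N" for i j
  proof -
    have "(if i = j then 1 else 0) = (\<Sum>l<N. R $$ (l,i) * R $$ (l,j))"
      using arg_cong[OF RtR, of "\<lambda>X. X $$ (i,j)"] ij R by (simp add: scalar_prod_def atLeast0LessThan)
    also have "\<dots> = (\<Sum>l<N'. R $$ (l,i) * R $$ (l,j)) + R $$ (N',i) * R $$ (N',j)"
      unfolding N' by simp
    also have "(\<Sum>l<N'. R $$ (l,i) * R $$ (l,j)) = (\<Sum>l<N'. Q $$ (l,i) * Q $$ (l,j))"
      using ij N' by (intro sum.cong refl) (auto simp: R_def)
    also have "R $$ (N',i) * R $$ (N',j) = 1 / real N"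
      using ij N' by (simp add: R_def real_sqrt_mult[symmetric])
    also have "(\<Sum>l<N'. Q $$ (l,i) * Q $$ (l,j)) = (Q\<^sup>T * Q) $$ (i,j)"
      using ij Q N' by (simp add: scalar_prod_def atLeast0LessThan)
    finally show ?thesis
      using ij by (simp add: Pi_mat_def)
  qed
  then have "Q\<^sup>T * Q = Pi_mat N"
    using Q by (intro eq_matI) (auto simp: Pi_mat_def)
  then show ?thesis
    unfolding valid_Q_def using Q Q_ones QQt by simp
qed

lemma valid_Q_Q_of: "N \<ge> 1 \<Longrightarrow> valid_Q N (Q_of N)"
  unfolding Q_of_def
  by (rule someI, rule valid_Q_if_orthonormal_rows[OF _ helmert_mat_carrier helmert_mat_ones
        helmert_mat_orthonormal_rows])

section \<open>Compression by \<open>Q\<close>\<close>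

lemma mult_assoc_of_dims:
  fixes A B C :: "'a::semiring_0 mat"
  shows "dim_col A = dim_row B \<Longrightarrow> dim_col B = dim_row C \<Longrightarrow> A * B * C = A * (B * C)"
  by (rule assoc_mult_mat[of A "dim_row A" "dim_col A" B "dim_col B" C "dim_col C"]) auto

lemma transpose_mult_of_dims:
  fixes A B :: "'a::comm_semiring_0 mat"
  shows "dim_col A = dim_row B \<Longrightarrow> (A * B)\<^sup>T = B\<^sup>T * A\<^sup>T"
  by (rule transpose_mult[of A "dim_row A" "dim_col A" B "dim_col B"]) auto

lemma valid_Q_reduced_compatible:
  assumes Q: "valid_Q N Q" and L: "L \<in> carrier_mat N N" and M: "M \<in> carrier_mat N N"
    and sym: "M\<^sup>T = M" and M_Pi: "M * Pi_mat N = M"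
    and compatible: "M * L + L\<^sup>T * M = 2 \<cdot>\<^sub>m (M * M)"
  shows "(Q * M * Q\<^sup>T) * (Q * L * Q\<^sup>T) + (Q * L * Q\<^sup>T)\<^sup>T * (Q * M * Q\<^sup>T)
    = 2 \<cdot>\<^sub>m ((Q * M * Q\<^sup>T) * (Q * M * Q\<^sup>T))"
proof -
  have Q_carrier: "Q \<in> carrier_mat (N - 1) N" and QtQ: "Q\<^sup>T * Q = Pi_mat N"
    using Q unfolding valid_Q_def by auto
  have dims[simp]: "dim_row Q = N - 1" "dim_col Q = N" "dim_row L = N" "dim_col L = N"
    "dim_row M = N" "dim_col M = N"
    using Q_carrier L M by auto
  have Pi_M: "Pi_mat N * M = M"
  proof -
    have "(M * Pi_mat N)\<^sup>T = (Pi_mat N)\<^sup>T * M"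
      using sym by (simp add: transpose_mult_of_dims Pi_mat_def)
    moreover have "(Pi_mat N)\<^sup>T = Pi_mat N"
      by (intro eq_matI) (auto simp: Pi_mat_def)
    ultimately show ?thesis
      unfolding M_Pi sym by simp
  qed
  have absorb_left: "Q\<^sup>T * (Q * (M * X)) = M * X" if "dim_row X = N" for X
  proof -
    have "Q\<^sup>T * (Q * (M * X)) = Q\<^sup>T * Q * M * X"
      using that by (simp add: mult_assoc_of_dims)
    then show ?thesis
      unfolding QtQ Pi_M .
  qed
  have absorb_right: "M * (Q\<^sup>T * (Q * X)) = M * X" if "dim_row X = N" for X
  proof -
    have "M * (Q\<^sup>T * (Q * X)) = M * (Q\<^sup>T * Q) * X"
      using that by (simp add: mult_assoc_of_dims)
    then show ?thesis
      unfolding QtQ M_Pi .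
  qed
  have "(Q * M * Q\<^sup>T) * (Q * L * Q\<^sup>T) + (Q * L * Q\<^sup>T)\<^sup>T * (Q * M * Q\<^sup>T)
      = Q * (M * L) * Q\<^sup>T + Q * (L\<^sup>T * M) * Q\<^sup>T"
    by (simp add: mult_assoc_of_dims transpose_mult_of_dims absorb_left absorb_right)
  also have "\<dots> = Q * (M * L + L\<^sup>T * M) * Q\<^sup>T"
    using Q_carrier L M mult_add_distrib_mat[of Q "N - 1" N "M * L" N "L\<^sup>T * M"]
      add_mult_distrib_mat[of "Q * (M * L)" "N - 1" N "Q * (L\<^sup>T * M)" "Q\<^sup>T" "N - 1"] by simp
  also have "\<dots> = 2 \<cdot>\<^sub>m (Q * (M * M) * Q\<^sup>T)"
    unfolding compatible using Q_carrier M
    by (simp add: mult_smult_distrib[of _ "N - 1" N _ N] mult_smult_assoc_mat[of _ "N - 1" N _ "N - 1"])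
  also have "Q * (M * M) * Q\<^sup>T = (Q * M * Q\<^sup>T) * (Q * M * Q\<^sup>T)"
    by (simp add: mult_assoc_of_dims absorb_left)
  finally show ?thesis .
qed

lemma valid_Q_reduced_positive_definite:
  assumes Q: "valid_Q N Q" and M: "M \<in> carrier_mat N N"
    and nonneg: "\<And>x. x \<in> carrier_vec N \<Longrightarrow> x \<bullet> (M *\<^sub>v x) \<ge> 0"
    and kernel: "\<And>x. x \<in> carrier_vec N \<Longrightarrow> x \<bullet> (M *\<^sub>v x) = 0 \<Longrightarrow> \<exists>c. x = c \<cdot>\<^sub>v ones_vec N"
  shows "positive_definite (N - 1) (Q * M * Q\<^sup>T)"
  unfolding positive_definite_def
proof (intro ballI impI)
  have Q_carrier: "Q \<in> carrier_mat (N - 1) N" and Q_ones: "Q *\<^sub>v ones_vec N = 0\<^sub>v (N - 1)"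
    and QQt: "Q * Q\<^sup>T = 1\<^sub>m (N - 1)"
    using Q unfolding valid_Q_def by auto
  fix y :: "real vec" assume y: "y \<in> carrier_vec (N - 1)" and y_nonzero: "y \<noteq> 0\<^sub>v (N - 1)"
  define x where "x = Q\<^sup>T *\<^sub>v y"
  have x: "x \<in> carrier_vec N"
    unfolding x_def using Q_carrier y by simp
  have "y \<bullet> ((Q * M * Q\<^sup>T) *\<^sub>v y) = y \<bullet> (Q *\<^sub>v (M *\<^sub>v x))"
    unfolding x_def using Q_carrier M y
    by (simp add: assoc_mult_mat_vec[of _ "N - 1" N _ "N - 1"] assoc_mult_mat_vec[of _ N N _ "N - 1"])
  also have "\<dots> = x \<bullet> (M *\<^sub>v x)"
    unfolding x_def using Q_carrier M y x by (intro transpose_vec_mult_scalar[symmetric]) auto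
  finally have form_eq: "y \<bullet> ((Q * M * Q\<^sup>T) *\<^sub>v y) = x \<bullet> (M *\<^sub>v x)" .
  show "y \<bullet> ((Q * M * Q\<^sup>T) *\<^sub>v y) > 0"
  proof (rule ccontr)
    assume "\<not> ?thesis"
    then obtain c where c: "x = c \<cdot>\<^sub>v ones_vec N"
      using form_eq nonneg[OF x] kernel[OF x] by fastforce
    have "y = (Q * Q\<^sup>T) *\<^sub>v y"
      unfolding QQt using y by simp
    also have "\<dots> = Q *\<^sub>v x"
      unfolding x_def using Q_carrier y by simp
    also have "\<dots> = c \<cdot>\<^sub>v (Q *\<^sub>v ones_vec N)"
      unfolding c using Q_carrier by (intro mult_mat_vec) (auto simp: ones_vec_def)
    also have "\<dots> = 0\<^sub>v (N - 1)"
      unfolding Q_ones by (intro eq_vecI) auto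
    finally show False
      using y_nonzero by simp
  qed
qed

section \<open>Laplacians\<close>

lemma index_mult_mat_sum:
  "X \<in> carrier_mat m n \<Longrightarrow> Y \<in> carrier_mat n p \<Longrightarrow> i < m \<Longrightarrow> j < p \<Longrightarrow>
    (X * Y) $$ (i,j) = (\<Sum>l<n. X $$ (i,l) * Y $$ (l,j))"
  by (simp add: scalar_prod_def atLeast0LessThan)

lemma symmetric_mat_entry:
  "B\<^sup>T = B \<Longrightarrow> B \<in> carrier_mat N N \<Longrightarrow> i < N \<Longrightarrow> j < N \<Longrightarrow> B $$ (j,i) = B $$ (i,j)"
  by (metis carrier_matD index_transpose_mat(1))

lemma out_degree_mat_carrier: "out_degree_mat N B \<in> carrier_mat N N"
  by (simp add: out_degree_mat_def)

lemma out_degree_mat_symmetric: "(out_degree_mat N B)\<^sup>T = out_degree_mat N B"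
  by (rule eq_matI) (auto simp: out_degree_mat_def)

lemma laplacian_carrier: "B \<in> carrier_mat N N \<Longrightarrow> laplacian N B \<in> carrier_mat N N"
  by (simp add: laplacian_def out_degree_mat_def minus_carrier_mat)

lemma laplacian_entry:
  "B \<in> carrier_mat N N \<Longrightarrow> i < N \<Longrightarrow> j < N \<Longrightarrow>
    laplacian N B $$ (i,j) = (if i = j then (\<Sum>l<N. B $$ (i,l)) else 0) - B $$ (i,j)"
  by (simp add: laplacian_def out_degree_mat_def)

lemma laplacian_mult_vec_entry:
  assumes B: "B \<in> carrier_mat N N" and x: "x \<in> carrier_vec N" and i: "i < N"
  shows "(laplacian N B *\<^sub>v x) $ i = (\<Sum>l<N. B $$ (i,l) * (x $ i - x $ l))"
proof -
  have "(laplacian N B *\<^sub>v x) $ i = (\<Sum>l<N. laplacian N B $$ (i,l) * x $ l)"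
    using laplacian_carrier[OF B] x i by (simp add: scalar_prod_def atLeast0LessThan)
  also have "\<dots> = (\<Sum>l<N. (if l = i then (\<Sum>k<N. B $$ (i,k)) * x $ i else 0) - B $$ (i,l) * x $ l)"
    using B i by (intro sum.cong) (auto simp: laplacian_entry algebra_simps)
  also have "\<dots> = (\<Sum>l<N. B $$ (i,l) * (x $ i - x $ l))"
    using i by (simp add: sum_subtractf sum_distrib_right right_diff_distrib)
  finally show ?thesis .
qed

lemma laplacian_mult_Pi:
  assumes B: "B \<in> carrier_mat N N"
  shows "laplacian N B * Pi_mat N = laplacian N B"
proof (rule eq_matI)
  fix i j assume "i < dim_row (laplacian N B)" "j < dim_col (laplacian N B)"
  then have ij: "i < N" "j < N"
    using laplacian_carrier[OF B] by auto
  have row_sum: "(\<Sum>l<N. laplacian N B $$ (i,l)) = 0"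
    using B ij by (simp add: laplacian_entry sum_subtractf)
  have "(laplacian N B * Pi_mat N) $$ (i,j)
      = (\<Sum>l<N. laplacian N B $$ (i,l) * ((if l = j then 1 else 0) - 1 / real N))"
    using laplacian_carrier[OF B] ij
    by (subst index_mult_mat_sum[of _ N N _ N]) (auto simp: Pi_mat_def intro!: sum.cong)
  also have "\<dots> = (\<Sum>l<N. (if l = j then laplacian N B $$ (i,l) else 0) - laplacian N B $$ (i,l) / real N)"
    by (intro sum.cong) (auto simp: algebra_simps)
  also have "\<dots> = (\<Sum>l<N. if l = j then laplacian N B $$ (i,l) else 0)
      - (\<Sum>l<N. laplacian N B $$ (i,l)) / real N"
    by (simp add: sum_subtractf sum_divide_distrib)
  also have "\<dots> = laplacian N B $$ (i,j)"
    using row_sum ij by simp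
  finally show "(laplacian N B * Pi_mat N) $$ (i,j) = laplacian N B $$ (i,j)" .
qed (use B in \<open>auto simp: laplacian_def out_degree_mat_def Pi_mat_def\<close>)

lemma laplacian_symmetric:
  assumes B: "B \<in> carrier_mat N N" and sym: "B\<^sup>T = B"
  shows "(laplacian N B)\<^sup>T = laplacian N B"
  using laplacian_carrier[OF B] B symmetric_mat_entry[OF sym B]
  by (intro eq_matI) (auto simp: laplacian_entry)

lemma laplacian_quadratic_form:
  assumes B: "B \<in> carrier_mat N N" and sym: "B\<^sup>T = B" and x: "x \<in> carrier_vec N"
  shows "x \<bullet> (laplacian N B *\<^sub>v x) = (\<Sum>i<N. \<Sum>j<N. B $$ (i,j) * (x $ i - x $ j)\<^sup>2) / 2"
proof -
  define S where "S = (\<Sum>i<N. \<Sum>j<N. B $$ (i,j) * (x $ i * (x $ i - x $ j)))"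
  have "x \<bullet> (laplacian N B *\<^sub>v x) = (\<Sum>i<N. x $ i * (laplacian N B *\<^sub>v x) $ i)"
    using laplacian_carrier[OF B] by (simp add: scalar_prod_def atLeast0LessThan del: index_mult_mat_vec)
  also have "\<dots> = S"
    unfolding S_def
  proof (rule sum.cong[OF refl])
    fix i assume "i \<in> {..<N}"
    then show "x $ i * (laplacian N B *\<^sub>v x) $ i = (\<Sum>j<N. B $$ (i,j) * (x $ i * (x $ i - x $ j)))"
      by (simp add: laplacian_mult_vec_entry[OF B x] sum_distrib_left mult.left_commute
          del: index_mult_mat_vec)
  qed
  moreover define T where "T = (\<Sum>i<N. \<Sum>j<N. B $$ (i,j) * (x $ j * (x $ j - x $ i)))"
  have "S = T"
    unfolding S_def T_def using symmetric_mat_entry[OF sym B] by (subst sum.swap) (auto intro!: sum.cong)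
  moreover have "S + T = (\<Sum>i<N. \<Sum>j<N. B $$ (i,j) * (x $ i - x $ j)\<^sup>2)"
    unfolding S_def T_def sum.distrib[symmetric]
    by (intro sum.cong refl) (simp add: power2_eq_square algebra_simps)
  ultimately show ?thesis
    by simp
qed

lemma undirected_version_carrier: "A \<in> carrier_mat N N \<Longrightarrow> undirected_version A \<in> carrier_mat N N"
  by (simp add: undirected_version_def)

lemma undirected_version_entry:
  "A \<in> carrier_mat N N \<Longrightarrow> i < N \<Longrightarrow> j < N \<Longrightarrow>
    undirected_version A $$ (i,j) = (A $$ (i,j) + A $$ (j,i)) / 2"
  by (simp add: undirected_version_def)

lemma undirected_version_symmetric:
  "A \<in> carrier_mat N N \<Longrightarrow> (undirected_version A)\<^sup>T = undirected_version A"
  by (intro eq_matI) (auto simp: undirected_version_def)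

lemma laplacian_undirected_version:
  assumes A: "A \<in> carrier_mat N N"
  shows "laplacian N (undirected_version A) = (1/2) \<cdot>\<^sub>m (laplacian N A + laplacian N A\<^sup>T)"
  using A undirected_version_carrier[OF A] laplacian_carrier[of "undirected_version A" N]
    laplacian_carrier[of A N] laplacian_carrier[of "A\<^sup>T" N]
  by (intro eq_matI)
    (auto simp: laplacian_entry undirected_version_entry sum.distrib sum_divide_distrib[symmetric] field_simps)

lemma undirected_laplacian_form_nonneg:
  assumes adj: "adjacency_matrix N A" and x: "x \<in> carrier_vec N"
  shows "x \<bullet> (laplacian N (undirected_version A) *\<^sub>v x) \<ge> 0"
proof -
  have A: "A \<in> carrier_mat N N" and nonneg: "\<And>i j. i < N \<Longrightarrow> j < N \<Longrightarrow> A $$ (i,j) \<ge> 0"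
    using adj unfolding adjacency_matrix_def by auto
  show ?thesis
    unfolding laplacian_quadratic_form[OF undirected_version_carrier[OF A]
      undirected_version_symmetric[OF A] x]
    using nonneg by (auto simp: undirected_version_entry[OF A]
        intro!: sum_nonneg divide_nonneg_nonneg mult_nonneg_nonneg add_nonneg_nonneg)
qed

lemma undirected_laplacian_form_eq_zero:
  assumes adj: "adjacency_matrix N A" and conn: "connected_graph N A" and x: "x \<in> carrier_vec N"
    and zero: "x \<bullet> (laplacian N (undirected_version A) *\<^sub>v x) = 0"
  shows "\<exists>c. x = c \<cdot>\<^sub>v ones_vec N"
proof -
  have A: "A \<in> carrier_mat N N" and nonneg: "\<And>i j. i < N \<Longrightarrow> j < N \<Longrightarrow> A $$ (i,j) \<ge> 0"
    using adj unfolding adjacency_matrix_def by auto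
  define w where "w i j = undirected_version A $$ (i,j) * (x $ i - x $ j)\<^sup>2" for i j
  have w_nonneg: "w i j \<ge> 0" if "i < N" "j < N" for i j
    unfolding w_def using nonneg that by (simp add: undirected_version_entry[OF A])
  have "(\<Sum>i<N. \<Sum>j<N. w i j) = 0"
    using zero unfolding w_def
    by (simp add: laplacian_quadratic_form[OF undirected_version_carrier[OF A]
          undirected_version_symmetric[OF A] x])
  then have "(\<Sum>j<N. w i j) = 0" if "i < N" for i
    using that w_nonneg by (subst (asm) sum_nonneg_eq_0_iff) (auto intro: sum_nonneg)
  then have w_zero: "w i j = 0" if "i < N" "j < N" for i j
    using that w_nonneg by (metis finite_lessThan lessThan_iff sum_nonneg_eq_0_iff)
  have edge: "x $ i = x $ j" if "(i,j) \<in> edges N A" for i j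
  proof -
    have ij: "i < N" "j < N" and "A $$ (i,j) > 0"
      using that by (auto simp: edges_def)
    then have "undirected_version A $$ (i,j) > 0"
      using nonneg by (simp add: undirected_version_entry[OF A] add_pos_nonneg)
    then show ?thesis
      using w_zero[OF ij] unfolding w_def by simp
  qed
  obtain k where k: "k < N" and reach: "\<And>i. i < N \<Longrightarrow> (i,k) \<in> (edges N A)\<^sup>*"
    using conn unfolding connected_graph_def globally_reachable_def by blast
  have "x $ i = x $ k" if "i < N" for i
    using reach[OF that] by (induction rule: rtrancl_induct) (auto dest: edge)
  then have "x = (x $ k) \<cdot>\<^sub>v ones_vec N"
    using x by (intro eq_vecI) (auto simp: ones_vec_def)
  then show ?thesis ..
qed

section \<open>Out-degree matrices that are column permutations of \<open>A\<close>\<close>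

lemma one_minus_orthogonal_mult_transpose:
  fixes T :: "'a::comm_ring_1 mat"
  assumes T: "T \<in> carrier_mat n n" and TTt: "T * T\<^sup>T = 1\<^sub>m n"
  shows "(1\<^sub>m n - T) * (1\<^sub>m n - T)\<^sup>T = (1\<^sub>m n - T) + (1\<^sub>m n - T)\<^sup>T"
proof -
  have "(1\<^sub>m n - T) * (1\<^sub>m n - T)\<^sup>T = (1\<^sub>m n - T) * (1\<^sub>m n - T\<^sup>T)"
    using T by (simp add: transpose_minus[of _ n n])
  also have "\<dots> = (1\<^sub>m n - T\<^sup>T) - (T - T * T\<^sup>T)"
    using T minus_mult_distrib_mat[of "1\<^sub>m n" n n T "1\<^sub>m n - T\<^sup>T" n]
      mult_minus_distrib_mat[of T n n "1\<^sub>m n" n "T\<^sup>T"] by (simp add: minus_carrier_mat)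
  also have "\<dots> = (1\<^sub>m n - T) + (1\<^sub>m n - T)\<^sup>T"
    unfolding TTt using T by (intro eq_matI) auto
  finally show ?thesis .
qed

lemma compatible_of_factorization:
  fixes D T :: "real mat"
  assumes D: "D \<in> carrier_mat n n" and T: "T \<in> carrier_mat n n"
    and D_sym: "D\<^sup>T = D" and TTt: "T * T\<^sup>T = 1\<^sub>m n"
  defines "U \<equiv> 1\<^sub>m n - T"
  defines "M \<equiv> (1/2) \<cdot>\<^sub>m (U\<^sup>T * D * U)"
  shows "M * (D * U) + (D * U)\<^sup>T * M = 2 \<cdot>\<^sub>m (M * M)"
proof -
  note square_mat_simps[where n = n, simp]
  have U: "U \<in> carrier_mat n n"
    unfolding U_def using T by (simp add: minus_carrier_mat)
  have UUt: "U * U\<^sup>T = U + U\<^sup>T"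
    unfolding U_def by (rule one_minus_orthogonal_mult_transpose[OF T TTt])
  define X where "X = U\<^sup>T * D * U"
  have X: "X \<in> carrier_mat n n"
    unfolding X_def using U D by simp
  have "X * X = U\<^sup>T * D * (U * U\<^sup>T) * (D * U)"
    unfolding X_def using U D by simp
  also have "\<dots> = U\<^sup>T * D * U * (D * U) + U\<^sup>T * D * U\<^sup>T * (D * U)"
    unfolding UUt using U D mult_add_distrib_mat[of "U\<^sup>T * D" n n U n "U\<^sup>T"]
      add_mult_distrib_mat[of "U\<^sup>T * D * U" n n "U\<^sup>T * D * U\<^sup>T" "D * U" n] by simp
  finally have XX: "X * X = U\<^sup>T * D * U * (D * U) + U\<^sup>T * D * U\<^sup>T * (D * U)" .
  have "M * (D * U) + (D * U)\<^sup>T * M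
      = (1/2) \<cdot>\<^sub>m (U\<^sup>T * D * U * (D * U)) + (1/2) \<cdot>\<^sub>m (U\<^sup>T * D * U\<^sup>T * (D * U))"
    unfolding M_def using U D D_sym by simp
  also have "\<dots> = 2 \<cdot>\<^sub>m ((1/4) \<cdot>\<^sub>m (X * X))"
    unfolding XX using U D by (intro eq_matI) auto
  also have "(1/4) \<cdot>\<^sub>m (X * X) = M * M"
    unfolding M_def X_def[symmetric] using X by (intro eq_matI) auto
  finally show ?thesis .
qed

lemma permutation_mat_carrier: "permutation_mat N P \<Longrightarrow> P \<in> carrier_mat N N"
  by (simp add: permutation_mat_def)

lemma permutation_mat_zero_one:
  "permutation_mat N P \<Longrightarrow> i < N \<Longrightarrow> j < N \<Longrightarrow> P $$ (i,j) = 0 \<or> P $$ (i,j) = 1"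
  by (simp add: permutation_mat_def)

lemma permutation_mat_row_unique:
  "permutation_mat N P \<Longrightarrow> i < N \<Longrightarrow> \<exists>!j. j < N \<and> P $$ (i,j) = 1"
  by (simp add: permutation_mat_def)

lemma permutation_mat_col_unique:
  "permutation_mat N P \<Longrightarrow> j < N \<Longrightarrow> \<exists>!i. i < N \<and> P $$ (i,j) = 1"
  by (simp add: permutation_mat_def)

lemma permutation_mat_entry_mult:
  assumes P: "permutation_mat N P" and i: "i < N" and j: "j < N" and l: "l < N"
  shows "P $$ (i,l) * P $$ (j,l) = (if i = j then P $$ (i,l) else 0)"
proof -
  from permutation_mat_col_unique[OF P l] obtain k
    where "\<forall>k'. k' < N \<and> P $$ (k',l) = 1 \<longrightarrow> k' = k"
    by (rule ex1E)
  then have "i = j" if "P $$ (i,l) = 1" "P $$ (j,l) = 1"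
    using i j that by blast
  then show ?thesis
    using permutation_mat_zero_one[OF P i l] permutation_mat_zero_one[OF P j l] by auto
qed

lemma permutation_mat_row_sum:
  assumes P: "permutation_mat N P" and i: "i < N"
  shows "(\<Sum>l<N. P $$ (i,l)) = 1"
proof -
  from permutation_mat_row_unique[OF P i] obtain j where j: "j < N \<and> P $$ (i,j) = 1"
    and unique: "\<forall>l. l < N \<and> P $$ (i,l) = 1 \<longrightarrow> l = j"
    by (rule ex1E)
  have "P $$ (i,l) = (if l = j then 1 else 0)" if "l < N" for l
  proof (cases "l = j")
    case True
    then show ?thesis
      using j by simp
  next
    case False
    then have "P $$ (i,l) \<noteq> 1"
      using unique that by blast
    then show ?thesis
      using permutation_mat_zero_one[OF P i that] False by simp
  qed
  then have "(\<Sum>l<N. P $$ (i,l)) = (\<Sum>l<N. if l = j then 1 else 0)"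
    by (intro sum.cong) auto
  also have "\<dots> = 1"
    using j by simp
  finally show ?thesis .
qed

lemma permutation_mat_mult_transpose:
  assumes P: "permutation_mat N P"
  shows "P * P\<^sup>T = 1\<^sub>m N"
proof (rule eq_matI)
  fix i j assume "i < dim_row (1\<^sub>m N)" "j < dim_col (1\<^sub>m N)"
  then have ij: "i < N" "j < N"
    by auto
  have "(P * P\<^sup>T) $$ (i,j) = (\<Sum>l<N. P $$ (i,l) * P $$ (j,l))"
    using permutation_mat_carrier[OF P] ij by (subst index_mult_mat_sum[of P N N "P\<^sup>T" N]) auto
  also have "\<dots> = (\<Sum>l<N. if i = j then P $$ (i,l) else 0)"
    using ij by (intro sum.cong) (auto simp: permutation_mat_entry_mult[OF P])
  finally show "(P * P\<^sup>T) $$ (i,j) = 1\<^sub>m N $$ (i,j)"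
    using ij permutation_mat_row_sum[OF P] by simp
qed (use permutation_mat_carrier[OF P] in auto)

lemma permutation_mat_transpose_mult:
  assumes P: "permutation_mat N P"
  shows "P\<^sup>T * P = 1\<^sub>m N"
  using mat_mult_left_right_inverse[OF permutation_mat_carrier[OF P] _ permutation_mat_mult_transpose[OF P]]
    permutation_mat_carrier[OF P] by simp

context
  fixes N :: nat and A P :: "real mat"
  assumes A: "A \<in> carrier_mat N N" and P: "permutation_mat N P"
    and out_degree_eq: "out_degree_mat N A = A * P"
begin

lemma adjacency_eq_out_degree_mult_transpose: "A = out_degree_mat N A * P\<^sup>T"
proof -
  have "out_degree_mat N A * P\<^sup>T = A * (P * P\<^sup>T)"
    unfolding out_degree_eq using A permutation_mat_carrier[OF P] by simp
  then show ?thesis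
    using A by (simp add: permutation_mat_mult_transpose[OF P])
qed

lemma adjacency_entry:
  assumes i: "i < N" and j: "j < N"
  shows "A $$ (i,j) = (\<Sum>l<N. A $$ (i,l)) * P $$ (j,i)"
proof -
  have "A $$ (i,j) = (\<Sum>l<N. out_degree_mat N A $$ (i,l) * P\<^sup>T $$ (l,j))"
    using i j out_degree_mat_carrier permutation_mat_carrier[OF P]
    by (subst adjacency_eq_out_degree_mult_transpose) (simp add: index_mult_mat_sum[of _ N N _ N])
  also have "\<dots> = (\<Sum>l<N. if l = i then (\<Sum>l<N. A $$ (i,l)) * P $$ (j,i) else 0)"
    using i j permutation_mat_carrier[OF P] by (intro sum.cong) (auto simp: out_degree_mat_def)
  finally show ?thesis
    using i by simp
qed

lemma transpose_adjacency_eq: "A\<^sup>T = P * out_degree_mat N A"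
proof -
  have "A\<^sup>T = (out_degree_mat N A * P\<^sup>T)\<^sup>T"
    using adjacency_eq_out_degree_mult_transpose by simp
  then show ?thesis
    using permutation_mat_carrier[OF P] out_degree_mat_carrier
    by (simp add: transpose_mult[of _ N N] out_degree_mat_symmetric)
qed

text \<open>The in-degree matrix is the out-degree matrix conjugated by \<open>P\<close>.\<close>
lemma out_degree_transpose_eq: "out_degree_mat N A\<^sup>T = P * out_degree_mat N A * P\<^sup>T"
proof (rule eq_matI)
  fix i j assume "i < dim_row (P * out_degree_mat N A * P\<^sup>T)" "j < dim_col (P * out_degree_mat N A * P\<^sup>T)"
  then have ij: "i < N" "j < N"
    using permutation_mat_carrier[OF P] by auto
  have "(P * out_degree_mat N A * P\<^sup>T) $$ (i,j) = (A\<^sup>T * P\<^sup>T) $$ (i,j)"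
    by (simp add: transpose_adjacency_eq)
  also have "\<dots> = (\<Sum>l<N. (\<Sum>k<N. A $$ (l,k)) * (P $$ (i,l) * P $$ (j,l)))"
    using A permutation_mat_carrier[OF P] ij
    by (subst index_mult_mat_sum[of _ N N _ N]) (auto simp: adjacency_entry intro!: sum.cong)
  also have "\<dots> = (if i = j then (\<Sum>l<N. A $$ (l,i)) else 0)"
    using ij by (auto simp: permutation_mat_entry_mult[OF P] adjacency_entry intro!: sum.cong)
  also have "\<dots> = out_degree_mat N A\<^sup>T $$ (i,j)"
    using A ij by (simp add: out_degree_mat_def)
  finally show "out_degree_mat N A\<^sup>T $$ (i,j) = (P * out_degree_mat N A * P\<^sup>T) $$ (i,j)" ..
qed (use permutation_mat_carrier[OF P] in \<open>auto simp: out_degree_mat_def\<close>)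

lemma laplacian_eq_factorization: "laplacian N A = out_degree_mat N A * (1\<^sub>m N - P\<^sup>T)"
  using out_degree_mat_carrier[of N A] permutation_mat_carrier[OF P]
    mult_minus_distrib_mat[of "out_degree_mat N A" N N "1\<^sub>m N" N "P\<^sup>T"]
  by (simp add: laplacian_def flip: adjacency_eq_out_degree_mult_transpose)

lemma laplacian_undirected_eq_factorization:
  "laplacian N (undirected_version A)
    = (1/2) \<cdot>\<^sub>m ((1\<^sub>m N - P\<^sup>T)\<^sup>T * out_degree_mat N A * (1\<^sub>m N - P\<^sup>T))"
proof -
  define D where "D = out_degree_mat N A"
  have D: "D \<in> carrier_mat N N" and P_carrier: "P \<in> carrier_mat N N"
    unfolding D_def using out_degree_mat_carrier permutation_mat_carrier[OF P] by auto
  have "(1\<^sub>m N - P\<^sup>T)\<^sup>T * D * (1\<^sub>m N - P\<^sup>T) = (D - P * D) * (1\<^sub>m N - P\<^sup>T)"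
    using D P_carrier minus_mult_distrib_mat[of "1\<^sub>m N" N N P D N]
    by (simp add: transpose_minus[of _ N N])
  also have "\<dots> = D * (1\<^sub>m N - P\<^sup>T) - (P * D - P * D * P\<^sup>T)"
    using D P_carrier minus_mult_distrib_mat[of D N N "P * D" "1\<^sub>m N - P\<^sup>T" N]
      mult_minus_distrib_mat[of "P * D" N N "1\<^sub>m N" N "P\<^sup>T"] by (simp add: minus_carrier_mat)
  also have "\<dots> = laplacian N A + laplacian N A\<^sup>T"
  proof -
    have "laplacian N A\<^sup>T = P * D * P\<^sup>T - P * D"
      unfolding D_def laplacian_def out_degree_transpose_eq by (simp only: transpose_adjacency_eq)
    then show ?thesis
      unfolding laplacian_eq_factorization D_def[symmetric] using D P_carrier
      by (intro eq_matI) (auto simp: minus_carrier_mat)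
  qed
  finally show ?thesis
    unfolding D_def laplacian_undirected_version[OF A] by simp
qed

lemma laplacian_compatible:
  "laplacian N (undirected_version A) * laplacian N A + (laplacian N A)\<^sup>T * laplacian N (undirected_version A)
    = 2 \<cdot>\<^sub>m (laplacian N (undirected_version A) * laplacian N (undirected_version A))"
  unfolding laplacian_undirected_eq_factorization laplacian_eq_factorization
  using permutation_mat_carrier[OF P]
  by (intro compatible_of_factorization out_degree_mat_carrier out_degree_mat_symmetric)
    (auto simp: permutation_mat_transpose_mult[OF P])

end

lemma Sigma_of_eq_lyapunov_solution:
  "Sigma_of N A = lyapunov_solution (N - 1) (reduced_laplacian N A)"
  by (simp add: Sigma_of_def lyapunov_solution_def)

theorem proposition1:
  fixes N :: nat and A :: "real mat"
  assumes "adjacency_matrix N A"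
    and "connected_graph N A"
    and "\<exists>P. permutation_mat N P \<and> out_degree_mat N A = A * P"
  shows "\<forall>k<N. \<forall>j<N. effective_resistance N A k j
            = effective_resistance N (undirected_version A) k j"
proof (intro allI impI)
  fix k j assume "k < N" "j < N"
  then have Q: "valid_Q N (Q_of N)"
    by (intro valid_Q_Q_of) simp
  obtain P where P: "permutation_mat N P" and out_degree_eq: "out_degree_mat N A = A * P"
    using assms(3) by blast
  have A: "A \<in> carrier_mat N N" and A\<^sub>u: "undirected_version A \<in> carrier_mat N N"
    using assms(1) undirected_version_carrier by (auto simp: adjacency_matrix_def)
  let ?L = "laplacian N A" and ?M = "laplacian N (undirected_version A)"
  have M: "?M \<in> carrier_mat N N" and M_sym: "?M\<^sup>T = ?M"
    using laplacian_carrier[OF A\<^sub>u] laplacian_symmetric[OF A\<^sub>u undirected_version_symmetric[OF A]] by auto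
  note positive_definite = valid_Q_reduced_positive_definite[OF Q M
      undirected_laplacian_form_nonneg[OF assms(1)] undirected_laplacian_form_eq_zero[OF assms(1,2)]]
  note compatible = valid_Q_reduced_compatible[OF Q laplacian_carrier[OF A] M M_sym
      laplacian_mult_Pi[OF A\<^sub>u] laplacian_compatible[OF A P out_degree_eq]]
  have "Sigma_of N A = Sigma_of N (undirected_version A)"
    unfolding Sigma_of_eq_lyapunov_solution reduced_laplacian_def
    by (rule lyapunov_solution_eq_of_compatible[OF _ _ _ positive_definite compatible])
      (use Q A M M_sym in \<open>auto simp: valid_Q_def laplacian_carrier transpose_mult_of_dims mult_assoc_of_dims\<close>)
  then show "effective_resistance N A k j = effective_resistance N (undirected_version A) k j"
    unfolding effective_resistance_def X_of_def by simp
qed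

end
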